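(* Let $H$ be a real Hilbert space and $A:H\to2^H$ a maximally monotone operator with $zer(A)\neq\emptyset$. Let $\varphi:[0,\infty)\to[0,\infty)$ be an increasing function vanishing only at $0$, and $(\gamma_n)$ a sequence in $(0,\infty)$ with $\sum_{n=0}^\infty\gamma_n^2=\infty$ having rate of divergence $\theta$. Let $b\in\mathbb{N}$, $p\in zer(A)$ and $C$ the closed ball of center $p$ and radius $b$. Suppose $A$ is uniformly monotone on $C$ with modulus $\varphi$. For $x\in C$ let $x_0:=x$ and $x_{n+1}:=J_{\gamma_nA}x_n$. Then $p$ is the unique zero of $A$ in $C$ and $(x_n)$ converges strongly to $p$ with rate of convergence $$\Psi_{b,\theta,\varphi}(k):=\theta\left(b^2\left(\left\lceil\frac{2b}{\varphi\left(\frac1{k+1}\right)}\right\rceil+1\right)^2\right)+1.$$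
   Context: $zer(A)=\{x:0\in A(x)\}$; $J_{\gamma A}:=(id_H+\gamma A)^{-1}$. $A$ is uniformly monotone on $C$ with modulus $\varphi$ if for all $x,y\in C$, $u\in A(x)$, $v\in A(y)$: $\langle x-y,u-v\rangle\ge\varphi(\|x-y\|)$. A rate of divergence for $\sum\gamma_n^2=\infty$ is $\theta:\mathbb{N}\to\mathbb{N}$ with $\sum_{n=0}^{\theta(K)}\gamma_n^2\ge K$ for all $K$. A rate of convergence of $a_n\to a$ is $\Phi$ with $\|a_n-a\|\le\frac1{k+1}$ for all $k$ and $n\ge\Phi(k)$. *)

theory Defs
  imports "HOL-Analysis.Analysis"
begin

definition monotone_op :: "('a::real_inner \<Rightarrow> 'a set) \<Rightarrow> bool" where
  "monotone_op A \<longleftrightarrow>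
     (\<forall>x y u v. u \<in> A x \<longrightarrow> v \<in> A y \<longrightarrow> inner (x - y) (u - v) \<ge> 0)"

definition maximally_monotone :: "('a::real_inner \<Rightarrow> 'a set) \<Rightarrow> bool" where
  "maximally_monotone A \<longleftrightarrow> monotone_op A \<and>
     (\<forall>B. monotone_op B \<and> (\<forall>x. A x \<subseteq> B x) \<longrightarrow> B = A)"

definition zer :: "('a::real_vector \<Rightarrow> 'a set) \<Rightarrow> 'a set" where
  "zer A = {x. 0 \<in> A x}"

text \<open>Resolvent J_{gamma A} = (id + gamma A)^{-1}, as a set-valued map:
  y \<in> J x iff x \<in> y + gamma A(y).\<close>
definition resolvent :: "real \<Rightarrow> ('a::real_vector \<Rightarrow> 'a set) \<Rightarrow> 'a \<Rightarrow> 'a set" where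
  "resolvent \<gamma> A x = {y. \<exists>u \<in> A y. x = y + \<gamma> *\<^sub>R u}"

definition uniformly_monotone_on ::
    "'a set \<Rightarrow> ('a::real_inner \<Rightarrow> 'a set) \<Rightarrow> (real \<Rightarrow> real) \<Rightarrow> bool" where
  "uniformly_monotone_on C A \<phi> \<longleftrightarrow>
     (\<forall>x\<in>C. \<forall>y\<in>C. \<forall>u\<in>A x. \<forall>v\<in>A y. inner (x - y) (u - v) \<ge> \<phi> (norm (x - y)))"

definition rate_of_divergence_sq :: "(nat \<Rightarrow> real) \<Rightarrow> (nat \<Rightarrow> nat) \<Rightarrow> bool" where
  "rate_of_divergence_sq \<gamma> \<theta> \<longleftrightarrow> (\<forall>K::nat. (\<Sum>n\<le>\<theta> K. (\<gamma> n)\<^sup>2) \<ge> real K)"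

definition rate_of_convergence :: "(nat \<Rightarrow> 'a::real_normed_vector) \<Rightarrow> 'a \<Rightarrow> (nat \<Rightarrow> nat) \<Rightarrow> bool" where
  "rate_of_convergence a l \<Phi> \<longleftrightarrow> (\<forall>k n. n \<ge> \<Phi> k \<longrightarrow> norm (a n - l) \<le> 1 / (real k + 1))"

definition Psi :: "nat \<Rightarrow> (nat \<Rightarrow> nat) \<Rightarrow> (real \<Rightarrow> real) \<Rightarrow> nat \<Rightarrow> nat" where
  "Psi b \<theta> \<phi> k =
     \<theta> (b\<^sup>2 * (nat \<lceil>2 * real b / \<phi> (1 / (real k + 1))\<rceil> + 1)\<^sup>2) + 1"

end

theory Submission
  imports Defs
begin

text \<open>Write x(n) = x(n+1) + \<gamma>(n) u(n) with u(n) \<in> A x(n+1). Monotonicity against the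
  zero p gives \<gamma>(n)^2 |u(n)|^2 \<le> |x(n) - p|^2 - |x(n+1) - p|^2, so the distances to p decrease
  and the weighted residuals telescope to at most b^2. As long as |x(n+1) - p| > \<epsilon>, uniform
  monotonicity bounds the residual from below, \<phi>(\<epsilon>) \<le> b |u(n)|; summing over the first
  \<theta>(K) steps contradicts the telescoping bound once K \<phi>(\<epsilon>)^2 exceeds b^4, which is what
  \<Psi> encodes.\<close>

lemma norm_add_scaleR_power2:
  fixes a v :: "'a::real_inner"
  shows "(norm (a + c *\<^sub>R v))\<^sup>2 = (norm a)\<^sup>2 + 2 * c * inner a v + c\<^sup>2 * (norm v)\<^sup>2"
  unfolding power2_norm_eq_inner
  by (simp add: inner_add_left inner_add_right inner_commute algebra_simps power2_eq_square)

lemma uniformly_monotone_on_zer_unique: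
  assumes "uniformly_monotone_on C A \<phi>" and "\<And>t. t > 0 \<Longrightarrow> \<phi> t > 0"
    and "p \<in> zer A" "p \<in> C" "q \<in> zer A" "q \<in> C"
  shows "q = p"
proof -
  have "\<phi> (norm (q - p)) \<le> inner (q - p) (0 - 0)"
    using assms(1,3-6) unfolding uniformly_monotone_on_def zer_def by blast
  then show ?thesis
    using assms(2)[of "norm (q - p)"] by force
qed

lemma uniformly_monotone_on_zer_residual:
  assumes "uniformly_monotone_on C A \<phi>" "p \<in> zer A" "p \<in> C" "y \<in> C" "u \<in> A y"
  shows "\<phi> (norm (y - p)) \<le> norm (y - p) * norm u"
proof -
  have "\<phi> (norm (y - p)) \<le> inner (y - p) (u - 0)"
    using assms unfolding uniformly_monotone_on_def zer_def by blast
  also have "\<dots> \<le> norm (y - p) * norm u"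
    using norm_cauchy_schwarz by simp
  finally show ?thesis .
qed

lemma rate_of_convergence_imp_LIMSEQ:
  assumes "rate_of_convergence a l \<Phi>"
  shows "a \<longlonglongrightarrow> l"
proof (rule LIMSEQ_I)
  fix r :: real
  assume "r > 0"
  then obtain k :: nat where "1 / r < real k + 1"
    by (metis reals_Archimedean2 add.commute less_add_same_cancel1 order.strict_trans zero_less_one)
  with \<open>r > 0\<close> have "1 / (real k + 1) < r"
    by (simp add: field_simps)
  then show "\<exists>no. \<forall>n\<ge>no. norm (a n - l) < r"
    using assms unfolding rate_of_convergence_def by (meson order.strict_trans1)
qed

lemma Psi_argument_bound:
  assumes "c > 0"
  shows "4 * real b ^ 4 \<le> real (b\<^sup>2 * (nat \<lceil>2 * real b / c\<rceil> + 1)\<^sup>2) * c\<^sup>2"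
proof -
  have "2 * real b / c \<le> real (nat \<lceil>2 * real b / c\<rceil>) + 1"
    by linarith
  then have "(2 * real b / c)\<^sup>2 \<le> (real (nat \<lceil>2 * real b / c\<rceil>) + 1)\<^sup>2"
    using assms by (intro power_mono) auto
  then have "(real b)\<^sup>2 * (2 * real b / c)\<^sup>2 * c\<^sup>2
      \<le> (real b)\<^sup>2 * (real (nat \<lceil>2 * real b / c\<rceil>) + 1)\<^sup>2 * c\<^sup>2"
    by (intro mult_right_mono mult_left_mono) auto
  moreover have "(real b)\<^sup>2 * (2 * real b / c)\<^sup>2 * c\<^sup>2 = 4 * real b ^ 4"
    using assms by (simp add: field_simps power2_eq_square eval_nat_numeral)
  ultimately show ?thesis
    by (simp add: add.commute)
qed

locale proximal_point_iteration =
  fixes A :: "'a::real_inner \<Rightarrow> 'a set" and \<gamma> :: "nat \<Rightarrow> real"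
    and xs u :: "nat \<Rightarrow> 'a" and p :: 'a
  assumes monotone: "monotone_op A"
    and p_zer: "p \<in> zer A"
    and gamma_nonneg: "\<And>n. \<gamma> n \<ge> 0"
    and residual: "\<And>n. u n \<in> A (xs (Suc n))"
    and step: "\<And>n. xs n = xs (Suc n) + \<gamma> n *\<^sub>R u n"
begin

lemma step_dist_power2:
  "(\<gamma> n)\<^sup>2 * (norm (u n))\<^sup>2 \<le> (norm (xs n - p))\<^sup>2 - (norm (xs (Suc n) - p))\<^sup>2"
proof -
  have decomp: "xs n - p = (xs (Suc n) - p) + \<gamma> n *\<^sub>R u n"
    using step[of n] by (simp add: algebra_simps)
  have "(norm (xs n - p))\<^sup>2 = (norm (xs (Suc n) - p))\<^sup>2
      + 2 * \<gamma> n * inner (xs (Suc n) - p) (u n) + (\<gamma> n)\<^sup>2 * (norm (u n))\<^sup>2"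
    unfolding decomp by (rule norm_add_scaleR_power2)
  moreover have "inner (xs (Suc n) - p) (u n - 0) \<ge> 0"
    using monotone residual[of n] p_zer unfolding monotone_op_def zer_def by blast
  ultimately show ?thesis
    using gamma_nonneg[of n] by (simp add: mult_nonneg_nonneg)
qed

lemma dist_decseq: "decseq (\<lambda>n. norm (xs n - p))"
proof (rule decseq_SucI)
  fix n
  have "(norm (xs (Suc n) - p))\<^sup>2 \<le> (norm (xs n - p))\<^sup>2"
    using step_dist_power2[of n] by (smt (verit) zero_le_power2 mult_nonneg_nonneg)
  then show "norm (xs (Suc n) - p) \<le> norm (xs n - p)"
    by (rule power2_le_imp_le) simp
qed

lemma dist_le_initial: "norm (xs n - p) \<le> norm (xs 0 - p)"
  using decseqD[OF dist_decseq, of 0 n] by simp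

lemma sum_step_power2_le:
  "(\<Sum>m\<le>N. (\<gamma> m)\<^sup>2 * (norm (u m))\<^sup>2) \<le> (norm (xs 0 - p))\<^sup>2"
proof -
  have "(\<Sum>m\<le>N. (\<gamma> m)\<^sup>2 * (norm (u m))\<^sup>2)
      \<le> (\<Sum>m\<le>N. (norm (xs m - p))\<^sup>2 - (norm (xs (Suc m) - p))\<^sup>2)"
    by (intro sum_mono step_dist_power2)
  also have "\<dots> = (norm (xs 0 - p))\<^sup>2 - (norm (xs (Suc N) - p))\<^sup>2"
    by (rule sum_telescope)
  finally show ?thesis
    by (smt (verit) zero_le_power2)
qed

lemma dist_le_if_sum_large:
  assumes unif: "uniformly_monotone_on (cball p r) A \<phi>"
    and phi_mono: "mono_on {0..} \<phi>"
    and start: "xs 0 \<in> cball p r"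
    and eps: "\<epsilon> \<ge> 0" "\<phi> \<epsilon> \<ge> 0"
    and large: "r ^ 4 < (\<Sum>m\<le>N. (\<gamma> m)\<^sup>2) * (\<phi> \<epsilon>)\<^sup>2"
    and n: "n > N"
  shows "norm (xs n - p) \<le> \<epsilon>"
proof -
  have dist_r: "norm (xs m - p) \<le> r" for m
    using dist_le_initial[of m] start by (simp add: dist_norm norm_minus_commute)
  have "\<exists>m\<le>N. norm (xs (Suc m) - p) \<le> \<epsilon>"
  proof (rule ccontr)
    assume "\<not> ?thesis"
    then have far: "\<epsilon> < norm (xs (Suc m) - p)" if "m \<le> N" for m
      using that by force
    have residual_lower: "(\<gamma> m)\<^sup>2 * (\<phi> \<epsilon>)\<^sup>2 \<le> r\<^sup>2 * ((\<gamma> m)\<^sup>2 * (norm (u m))\<^sup>2)"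
      if "m \<le> N" for m
    proof -
      have "\<phi> \<epsilon> \<le> \<phi> (norm (xs (Suc m) - p))"
        using far[OF that] eps by (intro mono_onD[OF phi_mono]) auto
      also have "\<dots> \<le> norm (xs (Suc m) - p) * norm (u m)"
        using dist_r[of "Suc m"] start
        by (intro uniformly_monotone_on_zer_residual[OF unif p_zer _ _ residual])
          (auto simp: dist_norm norm_minus_commute intro: order_trans[OF norm_ge_zero])
      also have "\<dots> \<le> r * norm (u m)"
        using dist_r[of "Suc m"] by (simp add: mult_right_mono)
      finally have "(\<phi> \<epsilon>)\<^sup>2 \<le> (r * norm (u m))\<^sup>2"
        using eps by (intro power_mono) auto
      then have "(\<gamma> m)\<^sup>2 * (\<phi> \<epsilon>)\<^sup>2 \<le> (\<gamma> m)\<^sup>2 * (r * norm (u m))\<^sup>2"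
        by (rule mult_left_mono) simp
      then show ?thesis
        by (simp add: power_mult_distrib ac_simps)
    qed
    have "(\<Sum>m\<le>N. (\<gamma> m)\<^sup>2) * (\<phi> \<epsilon>)\<^sup>2 = (\<Sum>m\<le>N. (\<gamma> m)\<^sup>2 * (\<phi> \<epsilon>)\<^sup>2)"
      by (simp add: sum_distrib_right)
    also have "\<dots> \<le> r\<^sup>2 * (\<Sum>m\<le>N. (\<gamma> m)\<^sup>2 * (norm (u m))\<^sup>2)"
      unfolding sum_distrib_left by (intro sum_mono residual_lower) auto
    also have "\<dots> \<le> r\<^sup>2 * r\<^sup>2"
    proof (rule mult_left_mono)
      have "(norm (xs 0 - p))\<^sup>2 \<le> r\<^sup>2"
        using dist_r[of 0] by (intro power_mono) auto
      then show "(\<Sum>m\<le>N. (\<gamma> m)\<^sup>2 * (norm (u m))\<^sup>2) \<le> r\<^sup>2"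
        using sum_step_power2_le[of N] by linarith
    qed simp
    also have "\<dots> = r ^ 4"
      by (simp flip: power_add)
    finally show False
      using large by linarith
  qed
  then obtain m where "m \<le> N" "norm (xs (Suc m) - p) \<le> \<epsilon>"
    by blast
  with n show ?thesis
    using decseqD[OF dist_decseq, of "Suc m" n] by simp
qed

lemma rate_of_convergence_Psi:
  assumes unif: "uniformly_monotone_on (cball p (real b)) A \<phi>"
    and phi_mono: "mono_on {0..} \<phi>"
    and phi_pos: "\<And>t. t > 0 \<Longrightarrow> \<phi> t > 0"
    and theta: "rate_of_divergence_sq \<gamma> \<theta>"
    and start: "xs 0 \<in> cball p (real b)"
  shows "rate_of_convergence xs p (Psi b \<theta> \<phi>)"
  unfolding rate_of_convergence_def
proof (intro allI impI)
  fix k n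
  assume n: "n \<ge> Psi b \<theta> \<phi> k"
  define \<epsilon> where "\<epsilon> = 1 / (real k + 1)"
  define K where "K = b\<^sup>2 * (nat \<lceil>2 * real b / \<phi> \<epsilon>\<rceil> + 1)\<^sup>2"
  have eps_pos: "\<epsilon> > 0" and c_pos: "\<phi> \<epsilon> > 0"
    by (simp_all add: \<epsilon>_def phi_pos)
  have "norm (xs n - p) \<le> \<epsilon>"
  proof (cases "b = 0")
    case True
    then show ?thesis
      using dist_le_initial[of n] start eps_pos by (simp add: dist_norm norm_minus_commute)
  next
    case False
    have "4 * real b ^ 4 \<le> real K * (\<phi> \<epsilon>)\<^sup>2"
      unfolding K_def by (rule Psi_argument_bound[OF c_pos])
    also have "\<dots> \<le> (\<Sum>m\<le>\<theta> K. (\<gamma> m)\<^sup>2) * (\<phi> \<epsilon>)\<^sup>2"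
      using theta unfolding rate_of_divergence_sq_def by (intro mult_right_mono) auto
    finally have "4 * real b ^ 4 \<le> (\<Sum>m\<le>\<theta> K. (\<gamma> m)\<^sup>2) * (\<phi> \<epsilon>)\<^sup>2" .
    moreover have "0 < real b ^ 4"
      using False by simp
    ultimately have "real b ^ 4 < (\<Sum>m\<le>\<theta> K. (\<gamma> m)\<^sup>2) * (\<phi> \<epsilon>)\<^sup>2"
      by linarith
    moreover have "n > \<theta> K"
      using n by (simp add: Psi_def K_def \<epsilon>_def)
    ultimately show ?thesis
      using dist_le_if_sum_large[OF unif phi_mono start] eps_pos c_pos by simp
  qed
  then show "norm (xs n - p) \<le> 1 / (real k + 1)"
    by (simp add: \<epsilon>_def)
qed

end

theorem proposition5p2:
  fixes A :: "'a::{real_inner, complete_space} \<Rightarrow> 'a set"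
    and \<phi> :: "real \<Rightarrow> real"
    and \<gamma> :: "nat \<Rightarrow> real"
    and \<theta> :: "nat \<Rightarrow> nat"
    and b :: nat
    and p x :: 'a
    and xs :: "nat \<Rightarrow> 'a"
  assumes maxmon: "maximally_monotone A"
    and zer_ne: "zer A \<noteq> {}"
    and phi_mono: "mono_on {0..} \<phi>"
    and phi_nonneg: "\<forall>t\<ge>0. \<phi> t \<ge> 0"
    and phi_zero: "\<forall>t\<ge>0. \<phi> t = 0 \<longleftrightarrow> t = 0"
    and gamma_pos: "\<forall>n. \<gamma> n > 0"
    and gamma_div: "\<not> summable (\<lambda>n. (\<gamma> n)\<^sup>2)"
    and theta: "rate_of_divergence_sq \<gamma> \<theta>"
    and p_zer: "p \<in> zer A"
    and unif: "uniformly_monotone_on (cball p (real b)) A \<phi>"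
    and x_in: "x \<in> cball p (real b)"
    and xs0: "xs 0 = x"
    and xs_step: "\<forall>n. xs (Suc n) \<in> resolvent (\<gamma> n) A (xs n)"
  shows "zer A \<inter> cball p (real b) = {p} \<and> xs \<longlonglongrightarrow> p
         \<and> rate_of_convergence xs p (Psi b \<theta> \<phi>)"
proof -
  have phi_pos: "\<phi> t > 0" if "t > 0" for t
  proof -
    have "\<phi> t \<ge> 0" "\<phi> t \<noteq> 0"
      using phi_nonneg phi_zero that by auto
    then show ?thesis
      by simp
  qed
  have "\<forall>n. \<exists>v. v \<in> A (xs (Suc n)) \<and> xs n = xs (Suc n) + \<gamma> n *\<^sub>R v"
    using xs_step by (auto simp: resolvent_def)
  then obtain u where residual: "\<And>n. u n \<in> A (xs (Suc n))"
    and step: "\<And>n. xs n = xs (Suc n) + \<gamma> n *\<^sub>R u n"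
    by metis
  have monotone: "monotone_op A"
    using maxmon by (simp add: maximally_monotone_def)
  have gamma_nonneg: "0 \<le> \<gamma> n" for n
    using gamma_pos by (simp add: less_imp_le)
  interpret proximal_point_iteration A \<gamma> xs u p
    by unfold_locales (fact monotone p_zer gamma_nonneg residual step)+
  have unique: "zer A \<inter> cball p (real b) = {p}"
    using uniformly_monotone_on_zer_unique[OF unif phi_pos] p_zer by auto
  have rate: "rate_of_convergence xs p (Psi b \<theta> \<phi>)"
    using rate_of_convergence_Psi[OF unif phi_mono phi_pos theta] x_in xs0 by simp
  show ?thesis
    using unique rate rate_of_convergence_imp_LIMSEQ by blast
qed

end
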